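(* Let $n\ge1$ and $m\ge2$. The maps $s_0,\dots,s_m$ on the vertex set of $Y_{n,m}$ satisfy the Coxeter relations of $\tilde C_m$: $s_i^2=\mathrm{Id}$ for all $0\le i\le m$; $(s_is_j)^2=\mathrm{Id}$ whenever $|i-j|>1$; $(s_is_{i+1})^3=\mathrm{Id}$ for all $1\le i\le m-2$; and $(s_0s_1)^4=(s_{m-1}s_m)^4=\mathrm{Id}$.
   Context: The Yoke graph $Y_{n,m}$ has vertices the tuples $v=(v_0,\dots,v_{m+1})$ with $v_0,v_{m+1}\in\mathbb{Z}_n$, $v_1,\dots,v_m\in\{0,1\}$, $\sum v_i\equiv0\pmod n$ (bucket entries $v_0,v_{m+1}$ computed mod $n$). For $0\le i\le m$ let $\overleftarrow{s}_i(v)$ be obtained from $v$ by replacing $v_i,v_{i+1}$ with $v_i+1,v_{i+1}-1$, and $\overrightarrow{s}_i(v)$ by replacing them with $v_i-1,v_{i+1}+1$ (whenever the result is a vertex). Define $s_0(v)=\overleftarrow{s}_0(v)$ if $v_1=1$ and $s_0(v)=\overrightarrow{s}_0(v)$ if $v_1=0$; $s_m(v)=\overleftarrow{s}_m(v)$ if $v_m=0$ and $s_m(v)=\overrightarrow{s}_m(v)$ if $v_m=1$; and for $1\le i\le m-1$, $s_i(v)$ is $v$ with entries $v_i$ and $v_{i+1}$ swapped. *)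

theory Defs
  imports Main
begin

text \<open>A vertex of the Yoke graph Y_{n,m} is represented as a function v :: nat => int,
  where v 0 and v (m+1) are the bucket entries, stored as canonical representatives
  in {0..<n} of Z_n, the entries v 1, ..., v m lie in {0,1}, all entries beyond
  index m+1 are 0, and the total sum is divisible by n.\<close>

definition yoke_vertices :: "nat \<Rightarrow> nat \<Rightarrow> (nat \<Rightarrow> int) set" where
  "yoke_vertices n m = {v.
      0 \<le> v 0 \<and> v 0 < int n \<and> 0 \<le> v (m+1) \<and> v (m+1) < int n
    \<and> (\<forall>i\<in>{1..m}. v i \<in> {0,1})
    \<and> (\<forall>i>m+1. v i = 0)
    \<and> (\<Sum>i\<le>m+1. v i) mod int n = 0}"

definition bucket_norm :: "nat \<Rightarrow> nat \<Rightarrow> (nat \<Rightarrow> int) \<Rightarrow> (nat \<Rightarrow> int)" where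
  "bucket_norm n m v = v(0 := v 0 mod int n, m+1 := v (m+1) mod int n)"

definition s_left :: "nat \<Rightarrow> nat \<Rightarrow> nat \<Rightarrow> (nat \<Rightarrow> int) \<Rightarrow> (nat \<Rightarrow> int)" where
  "s_left n m i v = bucket_norm n m (v(i := v i + 1, Suc i := v (Suc i) - 1))"

definition s_right :: "nat \<Rightarrow> nat \<Rightarrow> nat \<Rightarrow> (nat \<Rightarrow> int) \<Rightarrow> (nat \<Rightarrow> int)" where
  "s_right n m i v = bucket_norm n m (v(i := v i - 1, Suc i := v (Suc i) + 1))"

definition yoke_s :: "nat \<Rightarrow> nat \<Rightarrow> nat \<Rightarrow> (nat \<Rightarrow> int) \<Rightarrow> (nat \<Rightarrow> int)" where
  "yoke_s n m i v =
     (if i = 0 then (if v 1 = 1 then s_left n m 0 v else s_right n m 0 v)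
      else if i = m then (if v m = 0 then s_left n m m v else s_right n m m v)
      else v(i := v (Suc i), Suc i := v i))"

end

theory Submission
  imports Defs
begin

(* Each s_i changes only the coordinates i and i+1: the inner s_i swap two bits, while s_0
   (resp. s_m) flips the bit v_1 (resp. v_m) and moves the adjacent bucket by one step in the
   direction that keeps the coordinate sum fixed mod n.  Hence every s_i maps the vertex set
   to itself and is an involution there, and s_i, s_j commute when |i - j| > 1, which gives
   (s_i s_j)^2 = Id.  The remaining relations only involve three consecutive coordinates and
   are checked by evaluating the finitely many bit patterns. *)

lemma funpow_4: "(f ^^ 4) x = f (f (f (f x)))"
  by (simp add: eval_nat_numeral)

lemma commuting_involutions_funpow2:
  assumes "\<And>x. x \<in> A \<Longrightarrow> f (f x) = x" "\<And>x. x \<in> A \<Longrightarrow> g (g x) = x"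
    and "\<And>x. x \<in> A \<Longrightarrow> g x \<in> A" "\<And>x. x \<in> A \<Longrightarrow> f (g x) = g (f x)"
    and "x \<in> A"
  shows "((f \<circ> g) ^^ 2) x = x"
proof -
  have "((f \<circ> g) ^^ 2) x = f (g (f (g x)))"
    by (simp add: numeral_2_eq_2)
  also have "\<dots> = f (f (g (g x)))"
    using assms(3-5) by simp
  also have "\<dots> = x"
    using assms(1,2,5) by simp
  finally show ?thesis .
qed

lemma sum_fun_upd:
  fixes f :: "'a \<Rightarrow> 'b::ab_group_add"
  assumes "finite A" "i \<in> A"
  shows "sum (f(i := a)) A = sum f A - f i + a"
proof -
  have "sum (f(i := a)) A = a + sum f (A - {i})"
    using assms by (simp add: sum.remove)
  also have "\<dots> = sum f A - f i + a"
    using assms by (simp add: sum.remove)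
  finally show ?thesis .
qed

lemma sum_fun_upd_pair_mod:
  fixes v :: "'a \<Rightarrow> int"
  assumes "finite A" "i \<in> A" "j \<in> A" "i \<noteq> j" "(a + b) mod k = (v i + v j) mod k"
  shows "sum (v(i := a, j := b)) A mod k = sum v A mod k"
proof -
  have "sum (v(i := a, j := b)) A = sum v A - (v i + v j) + (a + b)"
    using assms(1-4) by (simp add: sum_fun_upd del: fun_upd_apply) simp
  then show ?thesis
    using assms(5) by (metis mod_add_right_eq diff_add_cancel add_diff_cancel)
qed

lemma yoke_vertex_bit:
  "v \<in> yoke_vertices n m \<Longrightarrow> 1 \<le> i \<Longrightarrow> i \<le> m \<Longrightarrow> v i \<in> {0, 1}"
  by (simp add: yoke_vertices_def)

lemma yoke_vertex_buckets:
  "v \<in> yoke_vertices n m \<Longrightarrow> v 0 \<in> {0..<int n} \<and> v (Suc m) \<in> {0..<int n}"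
  by (simp add: yoke_vertices_def)

lemma yoke_s_swap:
  "0 < i \<Longrightarrow> i < m \<Longrightarrow> yoke_s n m i v = v(i := v (Suc i), Suc i := v i)"
  by (simp add: yoke_s_def)

(* The step 2 * v 1 - 1 = +1 or -1 merges the s_left and s_right branches. *)
lemma yoke_s_first:
  assumes "1 \<le> m" "v 1 \<in> {0, 1}" "v (Suc m) \<in> {0..<int n}"
  shows "yoke_s n m 0 v = v(0 := (v 0 + 2 * v 1 - 1) mod int n, 1 := 1 - v 1)"
  using assms by (auto simp: yoke_s_def s_left_def s_right_def bucket_norm_def fun_eq_iff add.commute)

lemma yoke_s_last:
  assumes "1 \<le> m" "v m \<in> {0, 1}" "v 0 \<in> {0..<int n}"
  shows "yoke_s n m m v = v(m := 1 - v m, Suc m := (v (Suc m) + 2 * v m - 1) mod int n)"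
  using assms by (auto simp: yoke_s_def s_left_def s_right_def bucket_norm_def fun_eq_iff add.commute)

lemma yoke_s_mem_yoke_vertices:
  assumes "1 \<le> n" "1 \<le> m" "i \<le> m" "v \<in> yoke_vertices n m"
  shows "yoke_s n m i v \<in> yoke_vertices n m"
proof -
  have n: "0 < int n" using assms(1) by simp
  note bit = yoke_vertex_bit[OF assms(4)] and buckets = yoke_vertex_buckets[OF assms(4)]
  have sum_v: "(\<Sum>j\<le>m+1. v j) mod int n = 0"
    using assms(4) by (simp add: yoke_vertices_def)
  consider "i = 0" | "0 < i" "i < m" | "i = m" using assms(3) by linarith
  then show ?thesis
  proof cases
    case 1
    have s: "yoke_s n m i v = v(0 := (v 0 + 2 * v 1 - 1) mod int n, 1 := 1 - v 1)"
      using 1 assms(2) bit[of 1] buckets by (simp add: yoke_s_first)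
    have "(\<Sum>j\<le>m+1. yoke_s n m i v j) mod int n = 0"
      unfolding s sum_v[symmetric] by (rule sum_fun_upd_pair_mod) (auto simp: mod_simps)
    then show ?thesis
      using assms(2,4) bit n unfolding s by (auto simp: yoke_vertices_def)
  next
    case 2
    have s: "yoke_s n m i v = v(i := v (Suc i), Suc i := v i)"
      using 2 by (simp add: yoke_s_swap)
    have "(\<Sum>j\<le>m+1. yoke_s n m i v j) mod int n = 0"
      unfolding s sum_v[symmetric] using 2 by (intro sum_fun_upd_pair_mod) (auto simp: add.commute)
    then show ?thesis
      using 2 assms(4) bit unfolding s by (auto simp: yoke_vertices_def)
  next
    case 3
    have s: "yoke_s n m i v = v(m := 1 - v m, Suc m := (v (Suc m) + 2 * v m - 1) mod int n)"
      using 3 assms(2) bit[of m] buckets by (simp add: yoke_s_last)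
    have "(\<Sum>j\<le>m+1. yoke_s n m i v j) mod int n = 0"
      unfolding s sum_v[symmetric] by (rule sum_fun_upd_pair_mod) (auto simp: mod_simps)
    then show ?thesis
      using assms(2,4) bit n unfolding s by (auto simp: yoke_vertices_def)
  qed
qed

lemma yoke_s_involutive:
  assumes "1 \<le> m" "i \<le> m" "v \<in> yoke_vertices n m"
  shows "yoke_s n m i (yoke_s n m i v) = v"
proof -
  note bit = yoke_vertex_bit[OF assms(3)] and buckets = yoke_vertex_buckets[OF assms(3)]
  consider "i = 0" | "0 < i" "i < m" | "i = m" using assms(2) by linarith
  then show ?thesis
  proof cases
    case 1
    then show ?thesis
      using assms(1) bit[of 1] buckets by (auto simp: yoke_s_first mod_simps fun_eq_iff)
  next
    case 2
    then show ?thesis by (simp add: yoke_s_swap fun_eq_iff)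
  next
    case 3
    then show ?thesis
      using assms(1) bit[of m] buckets by (auto simp: yoke_s_last mod_simps fun_eq_iff)
  qed
qed

lemma yoke_s_commute:
  assumes "i + 1 < j" "j \<le> m" "v \<in> yoke_vertices n m"
  shows "yoke_s n m i (yoke_s n m j v) = yoke_s n m j (yoke_s n m i v)"
proof -
  note bit = yoke_vertex_bit[OF assms(3)] and buckets = yoke_vertex_buckets[OF assms(3)]
  consider "i = 0" "j = m" | "i = 0" "j < m" | "0 < i" "j = m" | "0 < i" "j < m"
    using assms(2) by linarith
  then show ?thesis
  proof cases
    case 1
    then show ?thesis
      using assms bit[of 1] bit[of m] buckets by (auto simp: yoke_s_first yoke_s_last fun_eq_iff)
  next
    case 2
    then show ?thesis
      using assms bit[of 1] buckets by (auto simp: yoke_s_first yoke_s_swap fun_eq_iff)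
  next
    case 3
    then show ?thesis
      using assms bit[of m] buckets by (auto simp: yoke_s_last yoke_s_swap fun_eq_iff)
  next
    case 4
    then show ?thesis
      using assms by (auto simp: yoke_s_swap fun_eq_iff)
  qed
qed

lemma yoke_s_far_order2:
  assumes "1 \<le> n" "i \<le> m" "j \<le> m" "i + 1 < j \<or> j + 1 < i"
    and "v \<in> yoke_vertices n m"
  shows "((yoke_s n m i \<circ> yoke_s n m j) ^^ 2) v = v"
proof (rule commuting_involutions_funpow2[where A = "yoke_vertices n m"])
  have m: "1 \<le> m" using assms(2-4) by linarith
  fix w assume w: "w \<in> yoke_vertices n m"
  show "yoke_s n m i (yoke_s n m i w) = w" "yoke_s n m j (yoke_s n m j w) = w"
    using m assms(2,3) w by (simp_all add: yoke_s_involutive)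
  show "yoke_s n m j w \<in> yoke_vertices n m"
    using m assms(1,3) w by (simp add: yoke_s_mem_yoke_vertices)
  show "yoke_s n m i (yoke_s n m j w) = yoke_s n m j (yoke_s n m i w)"
    using assms(2-4) w yoke_s_commute by metis
qed (fact assms(5))

lemma yoke_s_braid:
  assumes "0 < i" "i + 2 \<le> m"
  shows "((yoke_s n m i \<circ> yoke_s n m (i + 1)) ^^ 3) v = v"
  using assms by (simp add: yoke_s_swap numeral_3_eq_3 fun_eq_iff)

lemma yoke_s_first_order4:
  assumes "2 \<le> m" "v \<in> yoke_vertices n m"
  shows "((yoke_s n m 0 \<circ> yoke_s n m 1) ^^ 4) v = v"
proof -
  note bit = yoke_vertex_bit[OF assms(2)] and buckets = yoke_vertex_buckets[OF assms(2)]
  have s1: "yoke_s n m 1 w = w(1 := w 2, 2 := w 1)" for w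
    using assms(1) yoke_s_swap[of 1 m n w] by (simp add: numeral_2_eq_2)
  have "v 1 = 0 \<or> v 1 = 1" "v 2 = 0 \<or> v 2 = 1" using assms(1) bit[of 1] bit[of 2] by auto
  then show ?thesis
    using assms(1) buckets
    unfolding funpow_4 comp_apply s1
    by (elim disjE) (simp_all add: yoke_s_first mod_simps fun_eq_iff)
qed

lemma yoke_s_last_order4:
  assumes "2 \<le> m" "v \<in> yoke_vertices n m"
  shows "((yoke_s n m (m - 1) \<circ> yoke_s n m m) ^^ 4) v = v"
proof -
  note bit = yoke_vertex_bit[OF assms(2)] and buckets = yoke_vertex_buckets[OF assms(2)]
  obtain k where k: "m = Suc k" "0 < k" using assms(1) by (cases m) auto
  have s1: "yoke_s n m k w = w(k := w m, m := w k)" for w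
    using k yoke_s_swap[of k m n w] by simp
  have "v m = 0 \<or> v m = 1" "v k = 0 \<or> v k = 1"
    using k bit[of m] bit[of k] by auto
  then show ?thesis
    using buckets k(2)
    unfolding funpow_4 comp_apply k(1) diff_Suc_1 s1[unfolded k(1)]
    by (elim disjE) (simp_all add: yoke_s_last mod_simps fun_eq_iff)
qed

theorem proposition3p15:
  fixes n m :: nat
  assumes "n \<ge> 1" and "m \<ge> 2"
  shows "\<forall>v \<in> yoke_vertices n m.
      (\<forall>i\<le>m. (yoke_s n m i ^^ 2) v = v)
    \<and> (\<forall>i\<le>m. \<forall>j\<le>m. (i > j + 1 \<or> j > i + 1) \<longrightarrow>
          ((yoke_s n m i \<circ> yoke_s n m j) ^^ 2) v = v)
    \<and> (\<forall>i. 1 \<le> i \<and> i \<le> m - 2 \<longrightarrow>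
          ((yoke_s n m i \<circ> yoke_s n m (i+1)) ^^ 3) v = v)
    \<and> ((yoke_s n m 0 \<circ> yoke_s n m 1) ^^ 4) v = v
    \<and> ((yoke_s n m (m-1) \<circ> yoke_s n m m) ^^ 4) v = v"
proof -
  have "(yoke_s n m i ^^ 2) v = v" if "i \<le> m" "v \<in> yoke_vertices n m" for i v
    using assms(2) that by (simp add: numeral_2_eq_2 yoke_s_involutive)
  moreover have "((yoke_s n m i \<circ> yoke_s n m j) ^^ 2) v = v"
    if "i \<le> m" "j \<le> m" "i > j + 1 \<or> j > i + 1" "v \<in> yoke_vertices n m" for i j v
    by (rule yoke_s_far_order2[OF assms(1) that(1,2) _ that(4)]) (use that(3) in linarith)
  moreover have "((yoke_s n m i \<circ> yoke_s n m (i+1)) ^^ 3) v = v"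
    if "1 \<le> i" "i \<le> m - 2" for i v
    using assms(2) that by (intro yoke_s_braid) auto
  ultimately show ?thesis
    using yoke_s_first_order4[OF assms(2)] yoke_s_last_order4[OF assms(2)] by blast
qed

end
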